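(* Let $\phi:\mathbb{R}^2_{\ge}\times X\times\Omega\to X$ be a nonautonomous random dynamical system (NRDS) on a probability space $(\Omega,\mathcal{F},\mathbb{P})$ whose state space $X$ is finite. For $t\in\mathbb{R}$ and $\omega\in\Omega$ define \[ A(t,\omega):=\bigcap_{t_0\le t}\phi(t,t_0,X,\omega). \] Then $A(t,\omega)$ is nonempty for all $\omega\in\Omega$, $t\in\mathbb{R}$, and $A$ defines a global random pullback attractor. Moreover, for all $\omega\in\Omega$ and $t\in\mathbb{R}$ there exists $T_0(t,\omega)<t$ such that $\phi(t,t_0,X,\omega)=A(t,\omega)$ for all $t_0\le T_0(t,\omega)$. If, in addition, for each $p\in(0,1)$ there is $T_p>0$ such that \[ \mathbb{P}(\{\omega\in\Omega\mid t-T_0(t,\omega)\le T_p\})\ge p \quad\text{for all } t\in\mathbb{R}, \] then $A$ also defines a global random forward attractor, and for almost every $\omega\in\Omega$ and all $t_0\in\mathbb{R}$ there exists $T(t_0,\omega)>t_0$ such that $\phi(t,t_0,X,\omega)=A(t,\omega)$ for all $t\ge T(t_0,\omega)$.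
   Context: Let $\mathbb{R}^2_{\ge}:=\{(t,s)\in\mathbb{R}^2\mid t\ge s\}$, $(X,d_X)$ a Polish metric space and $(\Omega,\mathcal{F},\mathbb{P})$ a probability space. A map $\phi:\mathbb{R}^2_\ge\times X\times\Omega\to X$ is an NRDS if (i) it is $(\mathcal{B}(\mathbb{R}^2_\ge)\times\mathcal{B}(X)\times\mathcal{F},\mathcal{B}(X))$-measurable; (ii) $\phi(t,t,\cdot,\omega)$ is the identity on $X$ for all $t,\omega$; (iii) (cocycle property) $\phi(t,t_0,x,\omega)=\phi(t,s,\phi(s,t_0,x,\omega),\omega)$ for all $t\ge s\ge t_0$, $x\in X$, $\omega\in\Omega$; (iv) $x\mapsto\phi(t,s,x,\omega)$ is continuous. For $B\subset X$ write $\phi(t,t_0,B,\omega)=\{\phi(t,t_0,x,\omega)\mid x\in B\}$. A finite state space carries the discrete topology and the metric $d(x_1,x_2)=1$ if $x_1\ne x_2$, $0$ otherwise; $\mathrm{dist}(A_1,A_2):=\sup_{a_1\in A_1}\inf_{a_2\in A_2}d(a_1,a_2)$. A nonautonomous random set is a family $(C(t))_{t\in\mathbb{R}}$ of measurable subsets of $X\times\Omega$ (product $\sigma$-algebra), with $\omega$-sections $C(t,\omega)=\{x\mid (x,\omega)\in C(t)\}$; it is compact if every $C(t,\omega)$ is compact. A compact nonautonomous random set $A$ that is strictly $\phi$-invariant, i.e. $\phi(t,t_0,A(t_0,\omega),\omega)=A(t,\omega)$ for all $(t,t_0)\in\mathbb{R}^2_\ge$ a.s., is a global random pullback attractor if for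 each $t\in\mathbb{R}$, $\lim_{t_0\to-\infty}\mathrm{dist}(\phi(t,t_0,X,\omega),A(t,\omega))=0$ a.s.; it is a global random forward attractor if for each $t_0\in\mathbb{R}$, $\lim_{t\to\infty}\mathrm{dist}(\phi(t,t_0,X,\omega),A(t,\omega))=0$ a.s. *)

theory Defs
  imports "HOL-Probability.Probability"
begin

text \<open>Finite state space X is modelled by a type 'x of class finite, carrying the
discrete topology and the discrete metric. A map phi is given as a curried function
phi t s x w; only its values for s \<le> t matter.\<close>

definition ddist :: "'x \<Rightarrow> 'x \<Rightarrow> real" where
  "ddist x1 x2 = (if x1 = x2 then 0 else 1)"

definition hdist :: "'x set \<Rightarrow> 'x set \<Rightarrow> real" where
  "hdist A1 A2 = Sup ((\<lambda>a1. Inf ((\<lambda>a2. ddist a1 a2) ` A2)) ` A1)"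

definition phi_set :: "(real \<Rightarrow> real \<Rightarrow> 'x \<Rightarrow> 'w \<Rightarrow> 'x) \<Rightarrow> real \<Rightarrow> real \<Rightarrow> 'x set \<Rightarrow> 'w \<Rightarrow> 'x set" where
  "phi_set \<phi> t t0 B \<omega> = (\<lambda>x. \<phi> t t0 x \<omega>) ` B"

definition NRDS :: "'w measure \<Rightarrow> (real \<Rightarrow> real \<Rightarrow> 'x::finite \<Rightarrow> 'w \<Rightarrow> 'x) \<Rightarrow> bool" where
  "NRDS M \<phi> \<longleftrightarrow>
     (\<lambda>(p, x, \<omega>). \<phi> (fst p) (snd p) x \<omega>)
        \<in> measurable (restrict_space (borel :: (real \<times> real) measure) {p. snd p \<le> fst p}
                        \<Otimes>\<^sub>M count_space UNIV \<Otimes>\<^sub>M M) (count_space UNIV)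
   \<and> (\<forall>t. \<forall>\<omega>\<in>space M. \<forall>x. \<phi> t t x \<omega> = x)
   \<and> (\<forall>t s t0 x. \<forall>\<omega>\<in>space M. t0 \<le> s \<longrightarrow> s \<le> t \<longrightarrow>
         \<phi> t t0 x \<omega> = \<phi> t s (\<phi> s t0 x \<omega>) \<omega>)
   \<and> (\<forall>t s. \<forall>\<omega>\<in>space M. s \<le> t \<longrightarrow>
         continuous_map (discrete_topology UNIV) (discrete_topology UNIV) (\<lambda>x. \<phi> t s x \<omega>))"

text \<open>A nonautonomous random set given by its omega-sections C t w; the set C(t)
is {(x,w). w \<in> space M \<and> x \<in> C t w} and must be measurable in X \<times> Omega;
compactness of the sections is w.r.t. the discrete topology.\<close>
definition compact_nonaut_random_set :: "'w measure \<Rightarrow> (real \<Rightarrow> 'w \<Rightarrow> 'x::finite set) \<Rightarrow> bool" where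
  "compact_nonaut_random_set M C \<longleftrightarrow>
     (\<forall>t. {(x, \<omega>). \<omega> \<in> space M \<and> x \<in> C t \<omega>} \<in> sets (count_space UNIV \<Otimes>\<^sub>M M))
   \<and> (\<forall>t. \<forall>\<omega>\<in>space M. compactin (discrete_topology UNIV) (C t \<omega>))"

definition strictly_invariant :: "'w measure \<Rightarrow> (real \<Rightarrow> real \<Rightarrow> 'x \<Rightarrow> 'w \<Rightarrow> 'x) \<Rightarrow> (real \<Rightarrow> 'w \<Rightarrow> 'x set) \<Rightarrow> bool" where
  "strictly_invariant M \<phi> A \<longleftrightarrow>
     (AE \<omega> in M. \<forall>t t0. t0 \<le> t \<longrightarrow> phi_set \<phi> t t0 (A t0 \<omega>) \<omega> = A t \<omega>)"

definition global_random_pullback_attractor ::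
  "'w measure \<Rightarrow> (real \<Rightarrow> real \<Rightarrow> 'x::finite \<Rightarrow> 'w \<Rightarrow> 'x) \<Rightarrow> (real \<Rightarrow> 'w \<Rightarrow> 'x set) \<Rightarrow> bool" where
  "global_random_pullback_attractor M \<phi> A \<longleftrightarrow>
     compact_nonaut_random_set M A \<and> strictly_invariant M \<phi> A
   \<and> (\<forall>t. AE \<omega> in M. ((\<lambda>t0. hdist (phi_set \<phi> t t0 UNIV \<omega>) (A t \<omega>)) \<longlongrightarrow> 0) at_bot)"

definition global_random_forward_attractor ::
  "'w measure \<Rightarrow> (real \<Rightarrow> real \<Rightarrow> 'x::finite \<Rightarrow> 'w \<Rightarrow> 'x) \<Rightarrow> (real \<Rightarrow> 'w \<Rightarrow> 'x set) \<Rightarrow> bool" where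
  "global_random_forward_attractor M \<phi> A \<longleftrightarrow>
     compact_nonaut_random_set M A \<and> strictly_invariant M \<phi> A
   \<and> (\<forall>t0. AE \<omega> in M. ((\<lambda>t. hdist (phi_set \<phi> t t0 UNIV \<omega>) (A t \<omega>)) \<longlongrightarrow> 0) at_top)"

end

theory Submission
  imports Defs
begin

text \<open>For fixed t and \<omega> the images \<phi>(t,t0,X,\<omega>) shrink as t0 decreases, by the cocycle
property. In a finite state space such a family is eventually constant, and its final value is
A(t,\<omega>); invariance of A follows by pulling back far enough at both ends. Once \<phi>(T,t0,X,\<omega>)
has reached A(T,\<omega>), invariance keeps it equal to A(t,\<omega>) for all t \<ge> T, and so does starting
earlier than t0. The event that this happens for some T is measurable, because A(t) is a
countable intersection of measurable sets, and the tightness assumption on T0 gives it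
probability at least p for every p < 1. Intersecting over integer starting times t0 gives
almost sure forward convergence for all t0 at once.\<close>

lemma finite_mono_family_stabilises:
  fixes F :: "'i::linorder \<Rightarrow> 'x::finite set"
  assumes mono: "\<And>a b. a \<le> b \<Longrightarrow> b \<le> t \<Longrightarrow> F a \<subseteq> F b"
  shows "\<exists>s\<le>t. \<forall>r\<le>s. F r = (\<Inter>r\<in>{..t}. F r)"
proof -
  obtain s where s: "s \<le> t" and least: "\<And>r. r \<le> t \<Longrightarrow> card (F s) \<le> card (F r)"
    using ex_has_least_nat[of "\<lambda>s. s \<le> t" t "\<lambda>s. card (F s)"] by auto
  have const: "F r = F s" if "r \<le> s" for r
  proof -
    have "r \<le> t"
      using that s by (rule order_trans)
    then show ?thesis
      using card_seteq[OF finite mono[OF that s]] least by blast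
  qed
  have above: "F s \<subseteq> F r" if "r \<le> t" for r
  proof (cases "r \<le> s")
    case True
    then show ?thesis
      using const by blast
  next
    case False
    then show ?thesis
      using mono[OF less_imp_le that] by (simp add: not_le)
  qed
  have "(\<Inter>r\<in>{..t}. F r) = F s"
  proof
    show "(\<Inter>r\<in>{..t}. F r) \<subseteq> F s"
      using s by (intro INT_lower) simp
    show "F s \<subseteq> (\<Inter>r\<in>{..t}. F r)"
      by (intro INT_greatest above) simp
  qed
  then show ?thesis
    using s const by metis
qed

lemma hdist_self: "B \<noteq> {} \<Longrightarrow> hdist B B = 0"
proof -
  assume B: "B \<noteq> {}"
  have "Inf ((\<lambda>a2. ddist a1 a2) ` B) = 0" if "a1 \<in> B" for a1
    by (rule cInf_eq_minimum) (use that in \<open>auto simp: ddist_def\<close>)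
  then have "(\<lambda>a1. Inf ((\<lambda>a2. ddist a1 a2) ` B)) ` B = {0}"
    using B by auto
  then show ?thesis
    unfolding hdist_def by simp
qed

lemma tendsto_hdist_0_if_eventually_eq:
  assumes "\<forall>\<^sub>F s in F. B s = C s" and "\<And>s. C s \<noteq> {}"
  shows "((\<lambda>s. hdist (B s) (C s)) \<longlongrightarrow> 0) F"
  by (rule tendsto_eventually) (use assms in \<open>auto elim: eventually_mono simp: hdist_self\<close>)

definition pullback_limit_set :: "(real \<Rightarrow> real \<Rightarrow> 'x \<Rightarrow> 'w \<Rightarrow> 'x) \<Rightarrow> real \<Rightarrow> 'w \<Rightarrow> 'x set" where
  "pullback_limit_set \<phi> t \<omega> = (\<Inter>t0\<in>{..t}. phi_set \<phi> t t0 UNIV \<omega>)"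

locale finite_NRDS =
  fixes M :: "'w measure"
    and \<phi> :: "real \<Rightarrow> real \<Rightarrow> 'x::finite \<Rightarrow> 'w \<Rightarrow> 'x"
  assumes NRDS: "NRDS M \<phi>"
begin

lemma phi_set_cocycle:
  assumes "\<omega> \<in> space M" "t0 \<le> s" "s \<le> t"
  shows "phi_set \<phi> t s (phi_set \<phi> s t0 B \<omega>) \<omega> = phi_set \<phi> t t0 B \<omega>"
proof -
  have "\<phi> t s (\<phi> s t0 x \<omega>) \<omega> = \<phi> t t0 x \<omega>" for x
    using NRDS assms unfolding NRDS_def by metis
  then show ?thesis
    unfolding phi_set_def image_image by simp
qed

lemma phi_set_UNIV_mono:
  assumes "\<omega> \<in> space M" "s' \<le> s" "s \<le> t"
  shows "phi_set \<phi> t s' UNIV \<omega> \<subseteq> phi_set \<phi> t s UNIV \<omega>"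
  using phi_set_cocycle[OF assms, of UNIV] unfolding phi_set_def by auto

lemma pullback_limit_set_subset: "s \<le> t \<Longrightarrow> pullback_limit_set \<phi> t \<omega> \<subseteq> phi_set \<phi> t s UNIV \<omega>"
  unfolding pullback_limit_set_def by auto

lemma pullback_limit_set_stabilises:
  assumes "\<omega> \<in> space M"
  shows "\<exists>s\<le>t. \<forall>t0\<le>s. phi_set \<phi> t t0 UNIV \<omega> = pullback_limit_set \<phi> t \<omega>"
  using finite_mono_family_stabilises[of t "\<lambda>s. phi_set \<phi> t s UNIV \<omega>"]
    phi_set_UNIV_mono[OF assms]
  unfolding pullback_limit_set_def by blast

lemma pullback_limit_set_nonempty:
  assumes "\<omega> \<in> space M"
  shows "pullback_limit_set \<phi> t \<omega> \<noteq> {}"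
  using pullback_limit_set_stabilises[OF assms, of t] unfolding phi_set_def by auto

lemma pullback_limit_set_invariant:
  assumes "\<omega> \<in> space M" "t0 \<le> t"
  shows "phi_set \<phi> t t0 (pullback_limit_set \<phi> t0 \<omega>) \<omega> = pullback_limit_set \<phi> t \<omega>"
proof -
  obtain s1 where s1: "\<And>r. r \<le> s1 \<Longrightarrow> phi_set \<phi> t r UNIV \<omega> = pullback_limit_set \<phi> t \<omega>"
    using pullback_limit_set_stabilises[OF assms(1), of t] by auto
  obtain s2 where "s2 \<le> t0"
    and s2: "\<And>r. r \<le> s2 \<Longrightarrow> phi_set \<phi> t0 r UNIV \<omega> = pullback_limit_set \<phi> t0 \<omega>"
    using pullback_limit_set_stabilises[OF assms(1), of t0] by auto
  define s where "s = min s1 s2"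
  have "phi_set \<phi> t t0 (pullback_limit_set \<phi> t0 \<omega>) \<omega> = phi_set \<phi> t t0 (phi_set \<phi> t0 s UNIV \<omega>) \<omega>"
    using s2[of s] by (simp add: s_def)
  also have "\<dots> = phi_set \<phi> t s UNIV \<omega>"
    using phi_set_cocycle[OF assms(1), of s t0 t] \<open>s2 \<le> t0\<close> assms(2) by (simp add: s_def)
  also have "\<dots> = pullback_limit_set \<phi> t \<omega>"
    using s1[of s] by (simp add: s_def)
  finally show ?thesis .
qed

lemma reaches_pullback_limit_set_mono:
  assumes "\<omega> \<in> space M" "t0' \<le> t0" "t0 \<le> t" "t \<le> t'"
    and "phi_set \<phi> t t0 UNIV \<omega> = pullback_limit_set \<phi> t \<omega>"
  shows "phi_set \<phi> t' t0' UNIV \<omega> = pullback_limit_set \<phi> t' \<omega>"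
proof -
  have "phi_set \<phi> t t0' UNIV \<omega> = pullback_limit_set \<phi> t \<omega>"
    using phi_set_UNIV_mono[of \<omega> t0' t0 t] pullback_limit_set_subset[of t0' t \<omega>] assms by auto
  then show ?thesis
    using phi_set_cocycle[of \<omega> t0' t t' UNIV] pullback_limit_set_invariant[of \<omega> t t'] assms by simp
qed

lemma measurable_phi: "s \<le> t \<Longrightarrow> (\<lambda>\<omega>. \<phi> t s x \<omega>) \<in> M \<rightarrow>\<^sub>M count_space UNIV"
  using measurable_comp[of "\<lambda>\<omega>. ((t, s), x, \<omega>)" M, OF _ conjunct1[OF NRDS[unfolded NRDS_def]]]
  by (auto simp: o_def space_restrict_space
      intro!: measurable_Pair measurable_const measurable_ident_sets)

lemma pred_mem_phi_set:
  assumes "s \<le> t"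
  shows "Measurable.pred M (\<lambda>\<omega>. x \<in> phi_set \<phi> t s UNIV \<omega>)"
proof -
  have "Measurable.pred M (\<lambda>\<omega>. x = \<phi> t s y \<omega>)" for y
    using pred_sets2[OF _ measurable_phi[OF assms], of "{x}"] by (simp add: eq_commute)
  then show ?thesis
    unfolding phi_set_def image_iff by (simp add: pred_intros_countable(2))
qed

lemma pullback_limit_set_eq_INT_nat:
  assumes "\<omega> \<in> space M"
  shows "pullback_limit_set \<phi> t \<omega> = (\<Inter>n::nat. phi_set \<phi> t (t - real n) UNIV \<omega>)"
proof
  show "pullback_limit_set \<phi> t \<omega> \<subseteq> (\<Inter>n. phi_set \<phi> t (t - real n) UNIV \<omega>)"
    by (intro INT_greatest pullback_limit_set_subset) simp
  have "(\<Inter>n. phi_set \<phi> t (t - real n) UNIV \<omega>) \<subseteq> phi_set \<phi> t t0 UNIV \<omega>" if "t0 \<le> t" for t0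
  proof -
    have "t - real (nat \<lceil>t - t0\<rceil>) \<le> t0"
      by linarith
    then show ?thesis
      using phi_set_UNIV_mono[OF assms _ that] by blast
  qed
  then show "(\<Inter>n. phi_set \<phi> t (t - real n) UNIV \<omega>) \<subseteq> pullback_limit_set \<phi> t \<omega>"
    unfolding pullback_limit_set_def by blast
qed

lemma pred_mem_pullback_limit_set: "Measurable.pred M (\<lambda>\<omega>. x \<in> pullback_limit_set \<phi> t \<omega>)"
proof -
  have "Measurable.pred M (\<lambda>\<omega>. \<forall>n::nat. x \<in> phi_set \<phi> t (t - real n) UNIV \<omega>)"
    by (intro pred_intros_countable(1) pred_mem_phi_set) simp
  then show ?thesis
    by (rule measurable_cong[THEN iffD1, rotated]) (simp add: pullback_limit_set_eq_INT_nat)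
qed

lemma pred_reaches_pullback_limit_set:
  "s \<le> t \<Longrightarrow> Measurable.pred M (\<lambda>\<omega>. phi_set \<phi> t s UNIV \<omega> = pullback_limit_set \<phi> t \<omega>)"
  unfolding set_eq_iff
  by (intro pred_intros_countable(1) pred_intros_logic pred_mem_phi_set pred_mem_pullback_limit_set)

lemma compact_nonaut_random_set_pullback_limit_set:
  "compact_nonaut_random_set M (pullback_limit_set \<phi>)"
  unfolding compact_nonaut_random_set_def
proof (intro conjI allI ballI)
  fix t
  have "{(x, \<omega>). \<omega> \<in> space M \<and> x \<in> pullback_limit_set \<phi> t \<omega>}
      = (\<Union>x. {x} \<times> {\<omega> \<in> space M. x \<in> pullback_limit_set \<phi> t \<omega>})"
    by auto
  then show "{(x, \<omega>). \<omega> \<in> space M \<and> x \<in> pullback_limit_set \<phi> t \<omega>} \<in> sets (count_space UNIV \<Otimes>\<^sub>M M)"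
    using pred_mem_pullback_limit_set unfolding pred_def by (auto intro!: sets.finite_UN)
qed (simp add: compactin_discrete_topology)

lemma strictly_invariant_pullback_limit_set: "strictly_invariant M \<phi> (pullback_limit_set \<phi>)"
  unfolding strictly_invariant_def by (intro AE_I2 allI impI pullback_limit_set_invariant)

lemma global_random_pullback_attractor_pullback_limit_set:
  "global_random_pullback_attractor M \<phi> (pullback_limit_set \<phi>)"
  unfolding global_random_pullback_attractor_def
proof (intro conjI compact_nonaut_random_set_pullback_limit_set
    strictly_invariant_pullback_limit_set allI AE_I2)
  fix t \<omega>
  assume \<omega>: "\<omega> \<in> space M"
  then have "\<forall>\<^sub>F t0 in at_bot. phi_set \<phi> t t0 UNIV \<omega> = pullback_limit_set \<phi> t \<omega>"
    using pullback_limit_set_stabilises unfolding eventually_at_bot_linorder by blast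
  then show "((\<lambda>t0. hdist (phi_set \<phi> t t0 UNIV \<omega>) (pullback_limit_set \<phi> t \<omega>)) \<longlongrightarrow> 0) at_bot"
    using pullback_limit_set_nonempty[OF \<omega>] by (rule tendsto_hdist_0_if_eventually_eq)
qed

lemma global_random_forward_attractor_pullback_limit_set:
  assumes "AE \<omega> in M. \<forall>t0. \<exists>T>t0. \<forall>t\<ge>T. phi_set \<phi> t t0 UNIV \<omega> = pullback_limit_set \<phi> t \<omega>"
  shows "global_random_forward_attractor M \<phi> (pullback_limit_set \<phi>)"
  unfolding global_random_forward_attractor_def
proof (intro conjI compact_nonaut_random_set_pullback_limit_set
    strictly_invariant_pullback_limit_set allI)
  fix t0
  show "AE \<omega> in M. ((\<lambda>t. hdist (phi_set \<phi> t t0 UNIV \<omega>) (pullback_limit_set \<phi> t \<omega>)) \<longlongrightarrow> 0) at_top"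
    using assms
  proof (rule AE_mp, intro AE_I2 impI)
    fix \<omega>
    assume "\<omega> \<in> space M" "\<forall>t0. \<exists>T>t0. \<forall>t\<ge>T. phi_set \<phi> t t0 UNIV \<omega> = pullback_limit_set \<phi> t \<omega>"
    then show "((\<lambda>t. hdist (phi_set \<phi> t t0 UNIV \<omega>) (pullback_limit_set \<phi> t \<omega>)) \<longlongrightarrow> 0) at_top"
      by (intro tendsto_hdist_0_if_eventually_eq pullback_limit_set_nonempty)
        (auto simp: eventually_at_top_linorder)
  qed
qed

context
  fixes T0 :: "real \<Rightarrow> 'w \<Rightarrow> real"
  assumes prob_space: "prob_space M"
    and T0: "\<And>\<omega> t t0. \<omega> \<in> space M \<Longrightarrow> t0 \<le> T0 t \<omega> \<Longrightarrow>
      phi_set \<phi> t t0 UNIV \<omega> = pullback_limit_set \<phi> t \<omega>"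
    and T0_tight: "\<And>p. 0 < p \<Longrightarrow> p < 1 \<Longrightarrow>
      \<exists>Tp>0. \<forall>t. measure M {\<omega> \<in> space M. t - T0 t \<omega> \<le> Tp} \<ge> p"
begin

interpretation prob_space M
  by (fact prob_space)

lemma AE_reaches_pullback_limit_set:
  "AE \<omega> in M. \<exists>k::nat. phi_set \<phi> (t0 + k) t0 UNIV \<omega> = pullback_limit_set \<phi> (t0 + k) \<omega>"
proof -
  define E where
    "E = {\<omega> \<in> space M. \<exists>k::nat. phi_set \<phi> (t0 + k) t0 UNIV \<omega> = pullback_limit_set \<phi> (t0 + k) \<omega>}"
  have "Measurable.pred M
      (\<lambda>\<omega>. \<exists>k::nat. phi_set \<phi> (t0 + k) t0 UNIV \<omega> = pullback_limit_set \<phi> (t0 + k) \<omega>)"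
    by (intro pred_intros_countable(2) pred_reaches_pullback_limit_set) simp
  then have E: "E \<in> events"
    unfolding E_def pred_def .
  have "p \<le> prob E" if p: "0 < p" "p < 1" for p
  proof -
    obtain Tp where "Tp > 0" and Tp: "measure M {\<omega> \<in> space M. (t0 + Tp) - T0 (t0 + Tp) \<omega> \<le> Tp} \<ge> p"
      using T0_tight[OF p] by blast
    have "{\<omega> \<in> space M. (t0 + Tp) - T0 (t0 + Tp) \<omega> \<le> Tp} \<subseteq> E"
    proof safe
      fix \<omega>
      assume \<omega>: "\<omega> \<in> space M" and "t0 + Tp - T0 (t0 + Tp) \<omega> \<le> Tp"
      then have reached: "phi_set \<phi> (t0 + Tp) t0 UNIV \<omega> = pullback_limit_set \<phi> (t0 + Tp) \<omega>"
        by (intro T0) auto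
      have "t0 + Tp \<le> t0 + real (nat \<lceil>Tp\<rceil>)"
        by linarith
      then have "phi_set \<phi> (t0 + real (nat \<lceil>Tp\<rceil>)) t0 UNIV \<omega>
          = pullback_limit_set \<phi> (t0 + real (nat \<lceil>Tp\<rceil>)) \<omega>"
        using reaches_pullback_limit_set_mono[OF \<omega> order_refl _ _ reached] \<open>Tp > 0\<close> by simp
      then show "\<omega> \<in> E"
        unfolding E_def using \<omega> by blast
    qed
    then show ?thesis
      using Tp finite_measure_mono[OF _ E] by (meson order_trans)
  qed
  then have "prob E = 1"
    using dense_le_bounded[of 0 1 "prob E"] prob_le_1[of E] by simp
  from AE_prob_1[OF this] show ?thesis
    by eventually_elim (simp add: E_def)
qed

lemma AE_eventually_reaches_pullback_limit_set:
  "AE \<omega> in M. \<forall>t0. \<exists>T>t0. \<forall>t\<ge>T. phi_set \<phi> t t0 UNIV \<omega> = pullback_limit_set \<phi> t \<omega>"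
proof -
  have "AE \<omega> in M. \<forall>n::nat. \<exists>k::nat.
      phi_set \<phi> (real n + k) n UNIV \<omega> = pullback_limit_set \<phi> (real n + k) \<omega>"
    using AE_reaches_pullback_limit_set by (simp add: AE_all_countable)
  then show ?thesis
  proof (rule AE_mp, intro AE_I2 impI allI)
    fix \<omega> and t0 :: real
    assume \<omega>: "\<omega> \<in> space M" and reached: "\<forall>n::nat. \<exists>k::nat.
      phi_set \<phi> (real n + k) n UNIV \<omega> = pullback_limit_set \<phi> (real n + k) \<omega>"
    define n where "n = nat \<lceil>t0\<rceil>"
    have "t0 \<le> real n"
      unfolding n_def by linarith
    obtain k :: nat where "phi_set \<phi> (real n + k) n UNIV \<omega> = pullback_limit_set \<phi> (real n + k) \<omega>"
      using reached by blast
    then have "phi_set \<phi> t t0 UNIV \<omega> = pullback_limit_set \<phi> t \<omega>" if "t \<ge> real n + k" for t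
      using reaches_pullback_limit_set_mono[OF \<omega> \<open>t0 \<le> real n\<close> _ that] by simp
    then show "\<exists>T>t0. \<forall>t\<ge>T. phi_set \<phi> t t0 UNIV \<omega> = pullback_limit_set \<phi> t \<omega>"
      by (intro exI[of _ "max (real n + k) (t0 + 1)"]) auto
  qed
qed

end

end

theorem theorem6:
  fixes M :: "'w measure"
    and \<phi> :: "real \<Rightarrow> real \<Rightarrow> 'x::finite \<Rightarrow> 'w \<Rightarrow> 'x"
    and A :: "real \<Rightarrow> 'w \<Rightarrow> 'x set"
  assumes "prob_space M"
    and "NRDS M \<phi>"
    and A_def: "\<And>t \<omega>. A t \<omega> = (\<Inter>t0\<in>{..t}. phi_set \<phi> t t0 UNIV \<omega>)"
  shows "(\<forall>t. \<forall>\<omega>\<in>space M. A t \<omega> \<noteq> {})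
    \<and> global_random_pullback_attractor M \<phi> A
    \<and> (\<forall>\<omega>\<in>space M. \<forall>t. \<exists>T0 < t. \<forall>t0 \<le> T0. phi_set \<phi> t t0 UNIV \<omega> = A t \<omega>)
    \<and> (\<forall>T0 :: real \<Rightarrow> 'w \<Rightarrow> real.
         (\<forall>\<omega>\<in>space M. \<forall>t. T0 t \<omega> < t \<and> (\<forall>t0 \<le> T0 t \<omega>. phi_set \<phi> t t0 UNIV \<omega> = A t \<omega>))
         \<longrightarrow> (\<forall>p. 0 < p \<and> p < 1 \<longrightarrow> (\<exists>Tp > 0. \<forall>t.
                 measure M {\<omega> \<in> space M. t - T0 t \<omega> \<le> Tp} \<ge> p))
         \<longrightarrow> global_random_forward_attractor M \<phi> A
             \<and> (AE \<omega> in M. \<forall>t0. \<exists>T > t0. \<forall>t \<ge> T. phi_set \<phi> t t0 UNIV \<omega> = A t \<omega>))"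
proof -
  interpret finite_NRDS M \<phi>
    by unfold_locales fact
  have A: "A = pullback_limit_set \<phi>"
    by (simp add: fun_eq_iff A_def pullback_limit_set_def)
  have stabilises: "\<exists>T0<t. \<forall>t0\<le>T0. phi_set \<phi> t t0 UNIV \<omega> = A t \<omega>" if \<omega>: "\<omega> \<in> space M" for \<omega> t
  proof -
    obtain s where "\<forall>t0\<le>s. phi_set \<phi> t t0 UNIV \<omega> = A t \<omega>" "s \<le> t"
      using pullback_limit_set_stabilises[OF \<omega>, of t] unfolding A by blast
    then show ?thesis
      by (intro exI[of _ "s - 1"]) auto
  qed
  have forward: "global_random_forward_attractor M \<phi> A
      \<and> (AE \<omega> in M. \<forall>t0. \<exists>T>t0. \<forall>t\<ge>T. phi_set \<phi> t t0 UNIV \<omega> = A t \<omega>)"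
    if T0: "\<forall>\<omega>\<in>space M. \<forall>t. T0 t \<omega> < t \<and> (\<forall>t0\<le>T0 t \<omega>. phi_set \<phi> t t0 UNIV \<omega> = A t \<omega>)"
      and tight: "\<forall>p. 0 < p \<and> p < 1 \<longrightarrow> (\<exists>Tp>0. \<forall>t. measure M {\<omega> \<in> space M. t - T0 t \<omega> \<le> Tp} \<ge> p)"
    for T0
  proof -
    have "AE \<omega> in M. \<forall>t0. \<exists>T>t0. \<forall>t\<ge>T. phi_set \<phi> t t0 UNIV \<omega> = pullback_limit_set \<phi> t \<omega>"
      using T0 tight unfolding A
      by (intro AE_eventually_reaches_pullback_limit_set[of T0, OF \<open>prob_space M\<close>]) auto
    then show ?thesis
      using global_random_forward_attractor_pullback_limit_set unfolding A by blast
  qed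
  show ?thesis
    using pullback_limit_set_nonempty global_random_pullback_attractor_pullback_limit_set
      stabilises forward unfolding A by blast
qed

end
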